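(* Let $\rho_1,\dots,\rho_n$ be $d\times d$ positive definite density matrices, let $f(\rho):=\sum_{i=1}^n\operatorname{F}^{\mathrm U}(\rho_i,\rho)$ for density matrices $\rho$, and let $\sigma$ be the (unique, positive definite) maximizer of $f$ over all $d\times d$ density matrices. Then $$f(\sigma)^2=\sum_{i,j=1}^n\operatorname{F}_\sigma(\rho_i,\rho_j),\qquad\text{and}\qquad \operatorname{F}_\sigma(\rho_1,\dots,\rho_n)=\frac{f(\sigma)^2-n}{n^2-n}.$$
   Context: A density matrix is a positive semidefinite matrix of unit trace. The Uhlmann fidelity is $\operatorname{F}^{\mathrm U}(P,Q):=\operatorname{Tr}\sqrt{P^{1/2}QP^{1/2}}$. For positive definite $R$, the generalized fidelity is $\operatorname{F}_R(P,Q):=\operatorname{Tr}\big[\sqrt{R^{1/2}PR^{1/2}}\,R^{-1}\sqrt{R^{1/2}QR^{1/2}}\big]$. The generalized multivariate fidelity at $\sigma$ is $\operatorname{F}_\sigma(\rho_1,\dots,\rho_n):=\frac{1}{n(n-1)}\sum_{i\ne j}\operatorname{F}_\sigma(\rho_i,\rho_j)$, $n\ge2$. *)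

theory Defs
  imports "HOL-Analysis.Analysis"
begin

definition cadj :: "complex^'d^'d \<Rightarrow> complex^'d^'d" where
  "cadj A = (\<chi> i j. cnj (A $ j $ i))"

definition hermitian :: "complex^'d^'d \<Rightarrow> bool" where
  "hermitian A \<longleftrightarrow> cadj A = A"

definition cinner :: "complex^'d \<Rightarrow> complex^'d \<Rightarrow> complex" where
  "cinner x y = (\<Sum>i\<in>UNIV. cnj (x $ i) * y $ i)"

definition psd :: "complex^'d::finite^'d \<Rightarrow> bool" where
  "psd A \<longleftrightarrow> hermitian A \<and> (\<forall>x. 0 \<le> Re (cinner x (A *v x)))"

definition pd :: "complex^'d::finite^'d \<Rightarrow> bool" where
  "pd A \<longleftrightarrow> hermitian A \<and> (\<forall>x. x \<noteq> 0 \<longrightarrow> 0 < Re (cinner x (A *v x)))"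

definition density :: "complex^'d::finite^'d \<Rightarrow> bool" where
  "density A \<longleftrightarrow> psd A \<and> trace A = 1"

definition msqrt :: "complex^'d::finite^'d \<Rightarrow> complex^'d^'d" where
  "msqrt A = (THE B. psd B \<and> B ** B = A)"

text \<open>Uhlmann fidelity (the trace of a PSD matrix is real, so we take the real part).\<close>
definition uhlmann_fid :: "complex^'d::finite^'d \<Rightarrow> complex^'d^'d \<Rightarrow> real" where
  "uhlmann_fid P Q = Re (trace (msqrt (msqrt P ** Q ** msqrt P)))"

text \<open>Generalized fidelity F_R(P,Q), complex-valued in general.\<close>
definition gen_fid :: "complex^'d::finite^'d \<Rightarrow> complex^'d^'d \<Rightarrow> complex^'d^'d \<Rightarrow> complex" where
  "gen_fid R P Q =
     trace (msqrt (msqrt R ** P ** msqrt R) ** matrix_inv R ** msqrt (msqrt R ** Q ** msqrt R))"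

definition multi_fid :: "complex^'d::finite^'d \<Rightarrow> nat \<Rightarrow> (nat \<Rightarrow> complex^'d^'d) \<Rightarrow> complex" where
  "multi_fid \<sigma> n \<rho> =
     (\<Sum>i<n. \<Sum>j\<in>{..<n} - {i}. gen_fid \<sigma> (\<rho> i) (\<rho> j)) / (of_nat n * (of_nat n - 1))"

end

theory Submission
  imports Defs
begin

text \<open>Write \<open>\<sigma> = s\<^sup>2\<close> with \<open>s = \<sigma>\<^sup>1\<^sup>/\<^sup>2\<close>. Every density matrix is \<open>Y Y\<^sup>*\<close> with \<open>Y\<close> of unit
  Hilbert--Schmidt norm, and \<open>F(\<rho>\<^sub>i, Y Y\<^sup>*) = \<parallel>Y\<^sup>* \<rho>\<^sub>i\<^sup>1\<^sup>/\<^sup>2\<parallel>\<^sub>1 \<ge> Re tr (V Y\<^sup>* \<rho>\<^sub>i\<^sup>1\<^sup>/\<^sup>2)\<close> for every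
  unitary \<open>V\<close>, with equality at \<open>Y = s\<close> when \<open>V = W\<^sub>i\<close> is the polar factor of \<open>\<rho>\<^sub>i\<^sup>1\<^sup>/\<^sup>2 s\<close>.
  Hence \<open>s\<close> maximizes the linear functional \<open>Y \<mapsto> Re tr (Y\<^sup>* \<Sum>\<^sub>i \<rho>\<^sub>i\<^sup>1\<^sup>/\<^sup>2 W\<^sub>i)\<close> on the
  unit sphere, so \<open>\<Sum>\<^sub>i \<rho>\<^sub>i\<^sup>1\<^sup>/\<^sup>2 W\<^sub>i = f(\<sigma>) s\<close>, i.e. \<open>\<Sum>\<^sub>i A\<^sub>i = f(\<sigma>) \<sigma>\<close> for
  \<open>A\<^sub>i = (s \<rho>\<^sub>i s)\<^sup>1\<^sup>/\<^sup>2\<close>. Perturbing \<open>s\<close> along its kernel shows that \<open>\<sigma>\<close> is invertible. Then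
  \<open>\<Sum>\<^sub>i\<^sub>,\<^sub>j F\<^sub>\<sigma>(\<rho>\<^sub>i, \<rho>\<^sub>j) = tr ((\<Sum>\<^sub>i A\<^sub>i) \<sigma>\<^sup>-\<^sup>1 (\<Sum>\<^sub>j A\<^sub>j)) = f(\<sigma>)\<^sup>2 tr \<sigma> = f(\<sigma>)\<^sup>2\<close>,
  and the diagonal terms are \<open>F\<^sub>\<sigma>(\<rho>\<^sub>i, \<rho>\<^sub>i) = tr \<rho>\<^sub>i = 1\<close>.\<close>

section \<open>Adjoints and the complex inner product\<close>

lemma cadj_nth [simp]: "cadj A $ i $ j = cnj (A $ j $ i)"
  by (simp add: cadj_def)

lemma cadj_cadj [simp]: "cadj (cadj A) = A"
  by (simp add: vec_eq_iff)

lemma cadj_matrix_mult: "cadj ((A::complex^'n^'n) ** B) = cadj B ** cadj A"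
  by (simp add: matrix_matrix_mult_def vec_eq_iff mult.commute)

lemma cadj_add: "cadj (A + B) = cadj A + cadj B"
  by (simp add: vec_eq_iff)

lemma cadj_diff: "cadj (A - B) = cadj A - cadj B"
  by (simp add: vec_eq_iff)

lemma cadj_scaleR: "cadj (r *\<^sub>R A) = r *\<^sub>R cadj A"
  by (simp add: vec_eq_iff)

lemma cadj_sum: "finite S \<Longrightarrow> cadj (sum F S) = (\<Sum>i\<in>S. cadj (F i))"
  by (induct S rule: finite_induct) (auto simp: cadj_add vec_eq_iff)

lemma matrix_add_rdistrib: "((A::complex^'n^'n) + B) ** C = A ** C + B ** C"
  by (simp add: matrix_matrix_mult_def vec_eq_iff distrib_right sum.distrib)

lemma sum_matrix_mult:
  "finite S \<Longrightarrow> sum (F::_ \<Rightarrow> complex^'n^'n) S ** M = (\<Sum>i\<in>S. F i ** M)"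
  by (induct S rule: finite_induct) (auto simp: matrix_add_rdistrib)

lemma matrix_mult_sum:
  "finite S \<Longrightarrow> (M::complex^'n^'n) ** sum F S = (\<Sum>i\<in>S. M ** F i)"
  by (induct S rule: finite_induct) (auto simp: matrix_add_ldistrib)

lemma matrix_vector_mult_scaleR_complex:
  "(M::complex^'d::finite^'d) *v (r *\<^sub>R x) = r *\<^sub>R (M *v x)"
  by (simp add: matrix_vector_mult_def vec_eq_iff scaleR_sum_right)

lemma scaleR_eq_scale_of_real: "r *\<^sub>R (x::complex^'d) = of_real r *s x"
  by (simp add: vec_eq_iff scaleR_conv_of_real[where 'a=complex])

lemma sum_matrix_vector_mult:
  "finite S \<Longrightarrow> sum (F::_ \<Rightarrow> complex^'n^'m) S *v x = (\<Sum>i\<in>S. F i *v x)"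
  by (induct S rule: finite_induct) (auto simp: matrix_vector_mult_add_rdistrib)

lemma scaleR_matrix_vector_mult: "(r *\<^sub>R M) *v x = r *\<^sub>R ((M::complex^'n^'m) *v x)"
  by (simp add: matrix_vector_mult_def vec_eq_iff scaleR_sum_right)

lemma trace_sum: "finite S \<Longrightarrow> trace (sum F S) = (\<Sum>i\<in>S. trace (F i))"
  by (simp add: trace_def sum_component sum.swap[of _ S])

lemma trace_scaleR: "trace (r *\<^sub>R (A::complex^'n^'n)) = of_real r * trace A"
  by (simp add: trace_def sum_distrib_left) (simp add: scaleR_conv_of_real)

lemma Re_trace_cadj: "Re (trace (cadj A)) = Re (trace A)"
  by (simp add: trace_def)

lemma matrix_inv_if_injective:
  fixes A :: "'a::field^'n^'n"
  assumes "\<And>x. A *v x = 0 \<Longrightarrow> x = 0"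
  shows "A ** matrix_inv A = mat 1" "matrix_inv A ** A = mat 1"
proof -
  have "\<exists>B. A ** B = mat 1 \<and> B ** A = mat 1"
    using assms matrix_left_invertible_ker matrix_left_right_inverse by metis
  then have "A ** matrix_inv A = mat 1 \<and> matrix_inv A ** A = mat 1"
    unfolding matrix_inv_def by (rule someI_ex)
  then show "A ** matrix_inv A = mat 1" "matrix_inv A ** A = mat 1" by auto
qed

lemma cnj_cinner: "cnj (cinner x y) = cinner y x"
  by (simp add: cinner_def mult.commute)

lemma cinner_add_right: "cinner x (y + z) = cinner x y + cinner x z"
  by (simp add: cinner_def distrib_left sum.distrib)

lemma cinner_add_left: "cinner (x + y) z = cinner x z + cinner y z"
  by (simp add: cinner_def distrib_right sum.distrib)

lemma cinner_diff_right: "cinner x (y - z) = cinner x y - cinner x z"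
  by (simp add: cinner_def right_diff_distrib sum_subtractf)

lemma cinner_diff_left: "cinner (x - y) z = cinner x z - cinner y z"
  by (simp add: cinner_def left_diff_distrib sum_subtractf)

lemma cinner_scale_right: "cinner x (c *s y) = c * cinner x y"
  by (simp add: cinner_def sum_distrib_left algebra_simps)

lemma cinner_scale_left: "cinner (c *s x) y = cnj c * cinner x y"
  by (simp add: cinner_def sum_distrib_left algebra_simps)

lemma cinner_scaleR_right: "cinner x (r *\<^sub>R y) = of_real r * cinner x y"
  by (simp add: cinner_def sum_distrib_left) (simp add: scaleR_conv_of_real algebra_simps)

lemma cinner_scaleR_left: "cinner (r *\<^sub>R x) y = of_real r * cinner x y"
  by (simp add: cinner_def sum_distrib_left) (simp add: scaleR_conv_of_real algebra_simps)

lemma cinner_zero_right [simp]: "cinner x 0 = 0"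
  by (simp add: cinner_def)

lemma cinner_sum_right: "finite S \<Longrightarrow> cinner x (sum F S) = (\<Sum>i\<in>S. cinner x (F i))"
  by (induct S rule: finite_induct) (auto simp: cinner_add_right)

lemma cinner_eq_zero_sym: "cinner x y = 0 \<Longrightarrow> cinner y x = 0"
  by (metis cnj_cinner complex_cnj_zero)

lemma Re_cinner: "Re (cinner x y) = inner x y"
  by (simp add: cinner_def inner_vec_def inner_complex_def)

lemma cinner_self: "cinner x x = of_real ((norm x)\<^sup>2)"
proof -
  have "cinner x x = of_real (Re (cinner x x))"
    by (simp add: cinner_def complex_eq_iff)
  then show ?thesis by (simp add: Re_cinner power2_norm_eq_inner)
qed

lemma cinner_self_eq_0 [simp]: "cinner x x = 0 \<longleftrightarrow> x = 0"
  by (simp add: cinner_self)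

lemma Re_cinner_self: "Re (cinner x x) = (norm x)\<^sup>2"
  by (simp add: cinner_self)

lemma cinner_self_eq_1_iff: "cinner x x = 1 \<longleftrightarrow> norm x = 1"
proof -
  have "cinner x x = 1 \<longleftrightarrow> (norm x)\<^sup>2 = 1"
    unfolding cinner_self by (metis of_real_1 of_real_eq_iff)
  then show ?thesis using norm_ge_zero[of x] by (auto simp: power2_eq_1_iff)
qed

lemma cinner_cadj: "cinner x ((A::complex^'n^'n) *v y) = cinner (cadj A *v x) y"
  apply (simp add: cinner_def matrix_vector_mult_def sum_distrib_left sum_distrib_right)
  apply (subst sum.swap)
  apply (simp add: mult_ac)
  done

lemma hermitian_cinner: "hermitian A \<Longrightarrow> cinner x (A *v y) = cinner (A *v x) y"
  by (simp add: cinner_cadj hermitian_def)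

lemma hermitian_cinner_real:
  assumes "hermitian A"
  shows "cinner x (A *v x) = of_real (Re (cinner x (A *v x)))"
proof -
  have "cnj (cinner x (A *v x)) = cinner x (A *v x)"
    using assms by (simp add: cnj_cinner hermitian_cinner)
  then show ?thesis by (simp add: complex_eq_iff)
qed

lemma cinner_cadj_mult_self: "cinner x ((cadj Z ** Z) *v y) = cinner (Z *v x) (Z *v y)"
  by (simp add: cinner_cadj flip: matrix_vector_mul_assoc)

section \<open>Orthonormal bases and the spectral theorem\<close>

definition unitary :: "complex^'d^'d \<Rightarrow> bool" where
  "unitary U \<longleftrightarrow> cadj U ** U = mat 1"

definition orthonormal :: "'d set \<Rightarrow> ('d \<Rightarrow> complex^'d) \<Rightarrow> bool" where
  "orthonormal T v \<longleftrightarrow> (\<forall>a\<in>T. \<forall>b\<in>T. cinner (v a) (v b) = (if a = b then 1 else 0))"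

definition cols :: "('d \<Rightarrow> complex^'d) \<Rightarrow> complex^'d^'d" where
  "cols v = (\<chi> i j. v j $ i)"

lemma orthonormal_cinner_self: "orthonormal UNIV v \<Longrightarrow> cinner (v k) (v k) = 1"
  by (simp add: orthonormal_def)

lemma cadj_cols_mult_cols: "(cadj (cols v) ** cols w) $ a $ b = cinner (v a) (w b)"
  by (simp add: cols_def matrix_matrix_mult_def cinner_def)

lemma unitary_cols: "unitary (cols v) \<longleftrightarrow> orthonormal UNIV v"
  by (simp add: unitary_def orthonormal_def vec_eq_iff cadj_cols_mult_cols mat_def)

lemma unitary_mult_cadj: "unitary (U::complex^'d::finite^'d) \<Longrightarrow> U ** cadj U = mat 1"
  by (simp add: unitary_def matrix_left_right_inverse)

lemma unitary_cadj: "unitary (U::complex^'d::finite^'d) \<Longrightarrow> unitary (cadj U)"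
  by (simp add: unitary_def unitary_mult_cadj)

lemma unitary_mult: "unitary (U::complex^'d::finite^'d) \<Longrightarrow> unitary V \<Longrightarrow> unitary (U ** V)"
  unfolding unitary_def
  by (simp add: cadj_matrix_mult matrix_mul_assoc) (metis matrix_mul_assoc matrix_mul_lid)

lemma unitary_norm: "unitary (U::complex^'d::finite^'d) \<Longrightarrow> norm (U *v x) = norm x"
  using cinner_cadj[of "U *v x" U x]
  by (simp add: unitary_def matrix_vector_mul_assoc cinner_self power2_eq_iff_nonneg
      flip: of_real_power)

lemma matrix_mult_cols: "(M::complex^'d::finite^'d) ** cols v = cols (\<lambda>j. M *v v j)"
  by (simp add: cols_def matrix_matrix_mult_def matrix_vector_mult_def vec_eq_iff)

lemma cols_mult_axis: "cols v *v axis k 1 = v k"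
  by (simp add: cols_def matrix_vector_mult_def vec_eq_iff axis_def if_distrib cong: if_cong)

lemma cadj_cols_mult_orthonormal: "orthonormal UNIV v \<Longrightarrow> cadj (cols v) *v v k = axis k 1"
  by (simp add: orthonormal_def cols_def matrix_vector_mult_def vec_eq_iff axis_def
      cinner_def[symmetric])

lemma matrix_eq_on_orthonormal:
  fixes M N :: "complex^'d::finite^'d"
  assumes "orthonormal UNIV v" "\<And>k. M *v v k = N *v v k"
  shows "M = N"
proof -
  have "M ** cols v ** cadj (cols v) = N ** cols v ** cadj (cols v)"
    by (simp add: matrix_mult_cols assms(2))
  then show ?thesis
    using unitary_mult_cadj[of "cols v"] assms(1) by (simp add: unitary_cols flip: matrix_mul_assoc)
qed

lemma trace_orthonormal:
  fixes M :: "complex^'d::finite^'d"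
  assumes "orthonormal UNIV u"
  shows "trace M = (\<Sum>k\<in>UNIV. cinner (u k) (M *v u k))"
proof -
  have "trace M = trace (M ** cols u ** cadj (cols u))"
    using assms unitary_mult_cadj unitary_cols by (metis matrix_mul_assoc matrix_mul_rid)
  also have "\<dots> = trace (cadj (cols u) ** (M ** cols u))" by (rule trace_mul_sym)
  also have "\<dots> = (\<Sum>k\<in>UNIV. cinner (u k) (M *v u k))"
    by (simp only: matrix_mult_cols[of M u]) (simp add: trace_def cadj_cols_mult_cols)
  finally show ?thesis .
qed

text \<open>Orthogonality in the real inner product to both \<open>v\<close> and \<open>\<i> v\<close> is orthogonality in \<open>cinner\<close>;
  this reduces the complex statement to a real dimension count.\<close>
lemma exists_unit_orthogonal:
  fixes v :: "'d::finite \<Rightarrow> complex^'d"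
  assumes "T \<noteq> UNIV"
  shows "\<exists>x. norm x = 1 \<and> (\<forall>a\<in>T. cinner (v a) x = 0)"
proof -
  define S where "S = v ` T \<union> (\<lambda>a. \<i> *s v a) ` T"
  have "card S \<le> card (v ` T) + card ((\<lambda>a. \<i> *s v a) ` T)"
    unfolding S_def by (rule card_Un_le)
  also have "\<dots> \<le> 2 * card T"
    using card_image_le[of T v] card_image_le[of T "\<lambda>a. \<i> *s v a"] by simp
  finally have "card S \<le> 2 * card T" .
  moreover have "card T < CARD('d)"
    using assms by (simp add: psubset_card_mono[of UNIV T] psubsetI)
  ultimately have "dim S < DIM(complex^'d)"
    using dim_le_card[of S S] span_superset[of S] by (simp add: S_def)
  then obtain x where x: "x \<noteq> 0" "\<And>y. y \<in> span S \<Longrightarrow> orthogonal x y"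
    using orthogonal_to_subspace_exists by blast
  have "cinner (v a) x = 0" if "a \<in> T" for a
  proof -
    have "inner x (v a) = 0" "inner x (\<i> *s v a) = 0"
      using that x(2) by (auto simp: S_def orthogonal_def intro: span_base)
    then have "cinner x (v a) = 0"
      by (simp add: complex_eq_iff cinner_scale_right flip: Re_cinner)
    then show ?thesis by (rule cinner_eq_zero_sym)
  qed
  then show ?thesis
    using x(1) by (intro exI[of _ "(1 / norm x) *\<^sub>R x"]) (simp add: cinner_scaleR_right)
qed

lemma orthonormal_extend:
  fixes v :: "'d::finite \<Rightarrow> complex^'d"
  assumes step: "\<And>T v. T \<noteq> UNIV \<Longrightarrow> orthonormal T v \<Longrightarrow> (\<forall>a\<in>T. Q (v a)) \<Longrightarrow>
      \<exists>y. norm y = 1 \<and> (\<forall>a\<in>T. cinner (v a) y = 0) \<and> Q y"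
  shows "orthonormal T v \<Longrightarrow> (\<forall>a\<in>T. Q (v a)) \<Longrightarrow>
      \<exists>w. orthonormal UNIV w \<and> (\<forall>a. Q (w a)) \<and> (\<forall>a\<in>T. w a = v a)"
proof (induction "card (UNIV - T)" arbitrary: T v rule: less_induct)
  case less
  show ?case
  proof (cases "T = UNIV")
    case True
    then show ?thesis using less.prems by auto
  next
    case False
    then obtain a where a: "a \<notin> T" by auto
    obtain y where y: "norm y = 1" "\<forall>b\<in>T. cinner (v b) y = 0" "Q y"
      using step[OF False less.prems] by blast
    have "orthonormal (insert a T) (v(a := y))"
      using less.prems(1) y a cinner_self_eq_1_iff[of y]
      by (auto simp: orthonormal_def intro: cinner_eq_zero_sym)
    moreover have "\<forall>b\<in>insert a T. Q ((v(a := y)) b)" using less.prems(2) y(3) by auto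
    moreover have "card (UNIV - insert a T) < card (UNIV - T)"
      using a by (intro psubset_card_mono) auto
    ultimately obtain w where "orthonormal UNIV w" "\<forall>b. Q (w b)" "\<forall>b\<in>insert a T. w b = (v(a := y)) b"
      using less.hyps by blast
    then show ?thesis using a by auto
  qed
qed

lemma cinner_quadratic_expand:
  fixes H :: "complex^'d::finite^'d"
  shows "cinner (a + t *\<^sub>R b) (H *v (a + t *\<^sub>R b)) =
     cinner a (H *v a) + of_real t * (cinner a (H *v b) + cinner b (H *v a))
       + of_real (t^2) * cinner b (H *v b)"
  by (simp add: matrix_vector_right_distrib matrix_vector_mult_scaleR_complex
      cinner_add_left cinner_add_right cinner_scaleR_left cinner_scaleR_right algebra_simps
      power2_eq_square)

lemma quadratic_bound_imp_zero:
  fixes R C :: real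
  assumes bound: "\<And>t. 2 * t * R \<le> t^2 * C" and "R \<ge> 0"
  shows "R = 0"
proof (rule ccontr)
  assume "R \<noteq> 0"
  with \<open>R \<ge> 0\<close> have "R > 0" by simp
  define t where "t = R / (\<bar>C\<bar> + 1)"
  have "t > 0" using \<open>R > 0\<close> by (simp add: t_def add_pos_nonneg)
  have "2 * t * R \<le> t * (t * C)" using bound[of t] by (simp add: power2_eq_square)
  then have "2 * R \<le> t * C" using \<open>t > 0\<close> by simp
  also have "\<dots> \<le> t * \<bar>C\<bar>" using \<open>t > 0\<close> by (simp add: mult_left_mono)
  also have "\<dots> < R" using \<open>t > 0\<close> by (simp add: t_def field_simps)
  finally show False using \<open>R > 0\<close> by simp
qed

text \<open>First-order condition for the Rayleigh quotient: the residual \<open>r = H v - \<lambda> v\<close> is orthogonal to \<open>v\<close>,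
  and moving from \<open>v\<close> towards \<open>r\<close> increases the quotient at rate \<open>2 \<parallel>r\<parallel>\<^sup>2\<close>.\<close>
lemma hermitian_rayleigh_max_eigenvector:
  fixes H :: "complex^'d::finite^'d"
  assumes h: "hermitian H"
    and S_add: "\<And>x y. x \<in> S \<Longrightarrow> y \<in> S \<Longrightarrow> x + y \<in> S"
    and S_scale: "\<And>x c. x \<in> S \<Longrightarrow> c *s x \<in> S"
    and S_H: "\<And>x. x \<in> S \<Longrightarrow> H *v x \<in> S"
    and v: "v \<in> S" "norm v = 1"
    and max: "\<forall>x\<in>S. Re (cinner x (H *v x)) \<le> Re (cinner v (H *v v)) * (norm x)\<^sup>2"
  shows "H *v v = of_real (Re (cinner v (H *v v))) *s v"
proof -
  define lam where "lam = Re (cinner v (H *v v))"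
  define r where "r = H *v v - of_real lam *s v"
  have vv: "cinner v v = 1" using v(2) by (simp add: cinner_self_eq_1_iff)
  have qlam: "cinner v (H *v v) = of_real lam"
    using hermitian_cinner_real[OF h] by (simp add: lam_def)
  have rS: "r \<in> S"
    using S_add[OF S_H[OF v(1)] S_scale[OF v(1), of "- of_real lam"]] by (simp add: r_def)
  have vr: "cinner v r = 0" by (simp add: r_def cinner_diff_right cinner_scale_right qlam vv)
  have rv: "cinner r v = 0" using vr by (rule cinner_eq_zero_sym)
  have Hv: "H *v v = r + of_real lam *s v" by (simp add: r_def)
  have vHr: "cinner v (H *v r) = cinner r r"
    using h by (simp add: hermitian_cinner Hv cinner_add_left cinner_scale_left vr)
  have rHv: "cinner r (H *v v) = cinner r r"
    by (simp add: Hv cinner_add_right cinner_scale_right rv)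
  define R where "R = (norm r)\<^sup>2"
  define q where "q = Re (cinner r (H *v r))"
  have key: "2 * t * R \<le> t^2 * (lam * R - q)" for t :: real
  proof -
    have "v + t *\<^sub>R r \<in> S"
      using S_add[OF v(1) S_scale[OF rS, of "of_real t"]] by (simp add: scaleR_eq_scale_of_real)
    then have "Re (cinner (v + t *\<^sub>R r) (H *v (v + t *\<^sub>R r))) \<le> lam * (norm (v + t *\<^sub>R r))\<^sup>2"
      using max by (simp add: lam_def)
    moreover have "Re (cinner (v + t *\<^sub>R r) (H *v (v + t *\<^sub>R r))) = lam + 2 * t * R + t^2 * q"
      using cinner_quadratic_expand[of v t r H] by (simp add: qlam vHr rHv cinner_self R_def q_def)
    moreover have "cinner (v + t *\<^sub>R r) (v + t *\<^sub>R r) = of_real (1 + t^2 * R)"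
      by (simp add: cinner_add_left cinner_add_right cinner_scaleR_left cinner_scaleR_right
          vv vr rv cinner_self[of r] R_def power2_eq_square)
    then have "(norm (v + t *\<^sub>R r))\<^sup>2 = 1 + t^2 * R"
      unfolding cinner_self of_real_eq_iff .
    ultimately show ?thesis by (simp add: algebra_simps)
  qed
  have "R = 0" using key by (rule quadratic_bound_imp_zero) (simp add: R_def)
  then show ?thesis by (simp add: R_def r_def lam_def)
qed

lemma exists_rayleigh_max:
  fixes H :: "complex^'d::finite^'d"
  assumes "closed S" and S_scale: "\<And>x c. x \<in> S \<Longrightarrow> c *s x \<in> S" and "y \<in> S" "norm y = 1"
  shows "\<exists>v\<in>S. norm v = 1 \<and>
    (\<forall>x\<in>S. Re (cinner x (H *v x)) \<le> Re (cinner v (H *v v)) * (norm x)\<^sup>2)"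
proof -
  have "compact (S \<inter> sphere 0 1)" using \<open>closed S\<close> compact_sphere by (rule closed_Int_compact)
  moreover have "S \<inter> sphere 0 1 \<noteq> {}" using assms(3,4) by auto
  moreover have "continuous_on (S \<inter> sphere 0 1) (\<lambda>x. Re (cinner x (H *v x)))"
    unfolding cinner_def matrix_vector_mult_def by (intro continuous_intros)
  ultimately obtain v where v: "v \<in> S" "norm v = 1"
    and vmax: "\<forall>y\<in>S \<inter> sphere 0 1. Re (cinner y (H *v y)) \<le> Re (cinner v (H *v v))"
    using continuous_attains_sup by fastforce
  have "Re (cinner x (H *v x)) \<le> Re (cinner v (H *v v)) * (norm x)\<^sup>2" if "x \<in> S" for x
  proof (cases "x = 0")
    case False
    define x' where "x' = (1 / norm x) *\<^sub>R x"
    have "x' \<in> S" using S_scale[OF that] by (simp add: x'_def scaleR_eq_scale_of_real)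
    moreover have "norm x' = 1" using False by (simp add: x'_def)
    ultimately have "x' \<in> S \<inter> sphere 0 1" by simp
    then have "Re (cinner x' (H *v x')) \<le> Re (cinner v (H *v v))" using vmax by blast
    moreover have "Re (cinner x' (H *v x')) = Re (cinner x (H *v x)) / (norm x)\<^sup>2"
      by (simp add: x'_def matrix_vector_mult_scaleR_complex cinner_scaleR_left
          cinner_scaleR_right power2_eq_square)
    ultimately show ?thesis using False by (simp add: divide_le_eq mult.commute)
  qed simp
  then show ?thesis using v by blast
qed

lemma hermitian_eigenvector_orthogonal:
  fixes H :: "complex^'d::finite^'d" and v :: "'d \<Rightarrow> complex^'d"
  assumes h: "hermitian H" and T: "T \<noteq> UNIV"
    and ev: "\<forall>a\<in>T. \<exists>l::real. H *v v a = of_real l *s v a"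
  shows "\<exists>y. norm y = 1 \<and> (\<forall>a\<in>T. cinner (v a) y = 0) \<and> (\<exists>l::real. H *v y = of_real l *s y)"
proof -
  define S where "S = {x. \<forall>a\<in>T. cinner (v a) x = 0}"
  have S_add: "x \<in> S \<Longrightarrow> y \<in> S \<Longrightarrow> x + y \<in> S" for x y
    by (simp add: S_def cinner_add_right)
  have S_scale: "x \<in> S \<Longrightarrow> c *s x \<in> S" for x c
    by (simp add: S_def cinner_scale_right)
  have S_H: "H *v x \<in> S" if "x \<in> S" for x
  proof -
    have "cinner (v a) (H *v x) = 0" if a: "a \<in> T" for a
    proof -
      obtain l :: real where "H *v v a = of_real l *s v a" using ev a by blast
      then show ?thesis
        using h \<open>x \<in> S\<close> a by (simp add: hermitian_cinner cinner_scale_left S_def)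
    qed
    then show ?thesis by (simp add: S_def)
  qed
  have "closed {x. cinner (v a) x = 0}" for a
    unfolding cinner_def by (intro closed_Collect_eq continuous_intros)
  moreover have "S = (\<Inter>a\<in>T. {x. cinner (v a) x = 0})" by (auto simp: S_def)
  ultimately have "closed S" by auto
  obtain y where "y \<in> S" "norm y = 1"
    using exists_unit_orthogonal[OF T] by (auto simp: S_def)
  then obtain v0 where v0: "v0 \<in> S" "norm v0 = 1"
    and vmax: "\<forall>x\<in>S. Re (cinner x (H *v x)) \<le> Re (cinner v0 (H *v v0)) * (norm x)\<^sup>2"
    using exists_rayleigh_max[OF \<open>closed S\<close> S_scale] by meson
  have "H *v v0 = of_real (Re (cinner v0 (H *v v0))) *s v0"
    by (rule hermitian_rayleigh_max_eigenvector[OF h S_add S_scale S_H v0 vmax])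
  then show ?thesis using v0 by (auto simp: S_def)
qed

theorem hermitian_spectral:
  fixes H :: "complex^'d::finite^'d"
  assumes "hermitian H"
  obtains v d where "orthonormal UNIV v" "\<And>k. H *v v k = of_real (d k) *s v k"
proof -
  obtain w where "orthonormal UNIV w" "\<forall>a. \<exists>l::real. H *v w a = of_real l *s w a"
    using orthonormal_extend[where Q = "\<lambda>y. \<exists>l::real. H *v y = of_real l *s y" and T = "{}"]
      hermitian_eigenvector_orthogonal[OF assms]
    by (auto simp: orthonormal_def)
  then show ?thesis using that by metis
qed

section \<open>Positive square roots\<close>

definition outer :: "complex^'d \<Rightarrow> complex^'d \<Rightarrow> complex^'d^'d" where
  "outer x y = (\<chi> i j. x $ i * cnj (y $ j))"

lemma outer_mult_vec: "outer x y *v z = cinner y z *s (x::complex^'d::finite)"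
  by (simp add: outer_def matrix_vector_mult_def cinner_def vec_eq_iff sum_distrib_left mult_ac)

lemma matrix_mult_outer: "(M::complex^'d::finite^'d) ** outer x y = outer (M *v x) y"
  by (simp add: outer_def matrix_matrix_mult_def matrix_vector_mult_def vec_eq_iff
      sum_distrib_left mult_ac)

lemma outer_mult_matrix: "outer x y ** (M::complex^'d::finite^'d) = outer x (cadj M *v y)"
  by (simp add: outer_def matrix_matrix_mult_def matrix_vector_mult_def vec_eq_iff
      sum_distrib_left mult_ac)

lemma outer_zero_right [simp]: "outer x 0 = 0"
  by (simp add: outer_def vec_eq_iff)

lemma trace_outer: "trace (outer x (y::complex^'d::finite)) = cinner y x"
  by (simp add: outer_def trace_def cinner_def mult.commute)

lemma trace_mult_outer_mult:
  "trace ((M::complex^'d::finite^'d) ** outer y x ** N) = cinner x ((N ** M) *v y)"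
  using trace_mul_sym[of "M ** outer y x" N]
  by (simp add: matrix_mult_outer trace_outer matrix_mul_assoc matrix_vector_mul_assoc)

lemma cadj_outer: "cadj (outer x y) = outer y x"
  by (simp add: outer_def vec_eq_iff)

definition spectral_matrix :: "('d \<Rightarrow> complex^'d) \<Rightarrow> ('d \<Rightarrow> real) \<Rightarrow> complex^'d^'d" where
  "spectral_matrix v c = (\<Sum>k\<in>UNIV. c k *\<^sub>R outer (v k) (v k))"

lemma spectral_matrix_eigenvector:
  fixes v :: "'d::finite \<Rightarrow> complex^'d"
  assumes "orthonormal UNIV v"
  shows "spectral_matrix v c *v v j = of_real (c j) *s v j"
proof -
  have "spectral_matrix v c *v v j = (\<Sum>k\<in>UNIV. (of_real (c k) * (if k = j then 1 else 0)) *s v k)"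
    using assms
    by (simp add: spectral_matrix_def sum_matrix_vector_mult scaleR_matrix_vector_mult
        outer_mult_vec orthonormal_def scaleR_eq_scale_of_real)
  also have "\<dots> = of_real (c j) *s v j"
    by (simp add: if_distrib if_distribR sum.delta cong: if_cong)
  finally show ?thesis .
qed

lemma psd_spectral_matrix:
  assumes "\<And>k. c k \<ge> 0"
  shows "psd (spectral_matrix (v::'d::finite \<Rightarrow> complex^'d) c)"
  unfolding psd_def
proof (intro conjI allI)
  show "hermitian (spectral_matrix v c)"
    by (simp add: hermitian_def spectral_matrix_def cadj_sum cadj_scaleR cadj_outer)
  fix x
  have "Re (cinner x (spectral_matrix v c *v x)) = (\<Sum>k\<in>UNIV. c k * (cmod (cinner (v k) x))\<^sup>2)"
    by (simp add: spectral_matrix_def sum_matrix_vector_mult scaleR_matrix_vector_mult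
        outer_mult_vec cinner_sum_right cinner_scaleR_right cinner_scale_right Re_sum
        flip: cnj_cinner[of "v _" x] complex_norm_square)
  also have "\<dots> \<ge> 0" using assms by (intro sum_nonneg) simp
  finally show "0 \<le> Re (cinner x (spectral_matrix v c *v x))" .
qed

lemma psd_hermitian: "psd A \<Longrightarrow> hermitian A"
  by (simp add: psd_def)

lemma psd_cinner_nonneg: "psd A \<Longrightarrow> 0 \<le> Re (cinner x (A *v x))"
  by (simp add: psd_def)

lemma psd_cadj_mult_self: "psd (cadj (Z::complex^'d::finite^'d) ** Z)"
  by (simp add: psd_def hermitian_def cadj_matrix_mult cinner_cadj_mult_self Re_cinner_self)

lemma psd_mult_cadj_self: "psd ((Z::complex^'d::finite^'d) ** cadj Z)"
  using psd_cadj_mult_self[of "cadj Z"] by simp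

lemma psd_eigenvalue_nonneg:
  fixes H :: "complex^'d::finite^'d"
  assumes "psd H" "orthonormal UNIV v" "H *v v k = of_real (d k) *s v k"
  shows "d k \<ge> 0"
  using psd_cinner_nonneg[OF assms(1), of "v k"] assms(2,3)
  by (simp add: cinner_scale_right orthonormal_cinner_self)

lemma psd_sqrt_exists:
  fixes A :: "complex^'d::finite^'d"
  assumes "psd A"
  shows "\<exists>B. psd B \<and> B ** B = A"
proof -
  obtain v d where v: "orthonormal UNIV v" "\<And>k. A *v v k = of_real (d k) *s v k"
    using hermitian_spectral[OF psd_hermitian[OF assms]] by blast
  have d: "d k \<ge> 0" for k using psd_eigenvalue_nonneg[OF assms v(1) v(2)] .
  define B where "B = spectral_matrix v (\<lambda>k. sqrt (d k))"
  have "B ** B = A"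
  proof (rule matrix_eq_on_orthonormal[OF v(1)])
    fix k
    show "(B ** B) *v v k = A *v v k"
      using d[of k]
      by (simp add: B_def v(2) spectral_matrix_eigenvector[OF v(1)] vector_scalar_commute
          vector_smult_assoc flip: matrix_vector_mul_assoc of_real_mult)
  qed
  moreover have "psd B" unfolding B_def by (rule psd_spectral_matrix) (simp add: d)
  ultimately show ?thesis by blast
qed

lemma psd_cinner_eq_0_imp_eq_0:
  fixes A :: "complex^'d::finite^'d"
  assumes "psd A" "Re (cinner x (A *v x)) = 0"
  shows "A *v x = 0"
proof -
  obtain B where B: "psd B" "B ** B = A" using psd_sqrt_exists[OF assms(1)] by blast
  have "A *v x = B *v (B *v x)" using B(2) by (simp add: matrix_vector_mul_assoc)
  then have "cinner x (A *v x) = cinner (B *v x) (B *v x)"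
    using hermitian_cinner[OF psd_hermitian[OF B(1)]] by simp
  then have "B *v x = 0" using assms(2) by (simp add: Re_cinner_self)
  then show ?thesis using B(2) by (metis matrix_vector_mul_assoc matrix_vector_mult_0_right)
qed

text \<open>Uniqueness: on an eigenvector \<open>w\<close> of \<open>B - C\<close> with eigenvalue \<open>\<mu>\<close>,
  \<open>0 = \<langle>(B - C) w, (B + C) w\<rangle> = \<mu> (\<langle>w, B w\<rangle> + \<langle>w, C w\<rangle>)\<close>, a sum of nonnegative terms.\<close>
lemma psd_sqrt_unique:
  fixes B C :: "complex^'d::finite^'d"
  assumes B: "psd B" and C: "psd C" and eq: "B ** B = C ** C"
  shows "B = C"
proof -
  have "hermitian (B - C)"
    using B C by (simp add: psd_def hermitian_def cadj_diff)
  then obtain v mu where v: "orthonormal UNIV v" "\<And>k. (B - C) *v v k = of_real (mu k) *s v k"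
    using hermitian_spectral by blast
  have "(B - C) *v v k = 0 *v v k" for k
  proof (cases "mu k = 0")
    case False
    define w b c where "w = v k" and "b = B *v w" and "c = C *v w"
    have bc: "b - c = of_real (mu k) *s w"
      using v(2)[of k] by (simp add: b_def c_def w_def matrix_vector_mult_diff_rdistrib)
    have "cinner b b = cinner c c"
      using hermitian_cinner[OF psd_hermitian[OF B], of w b]
        hermitian_cinner[OF psd_hermitian[OF C], of w c] eq
      by (simp add: b_def c_def matrix_vector_mul_assoc)
    moreover have "Re (cinner c b) = Re (cinner b c)"
      using cnj_cinner[of b c] by (metis cnj.sel(1))
    ultimately have "Re (cinner (b - c) (b + c)) = 0"
      by (simp add: cinner_diff_left cinner_add_right)
    then have "mu k * (Re (cinner w b) + Re (cinner w c)) = 0"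
      by (simp add: bc cinner_scale_left cinner_add_right ring_distribs)
    moreover have "Re (cinner w b) \<ge> 0" "Re (cinner w c) \<ge> 0"
      using psd_cinner_nonneg[OF B] psd_cinner_nonneg[OF C] by (auto simp: b_def c_def)
    ultimately have "Re (cinner w b) = 0" "Re (cinner w c) = 0"
      using False by (auto simp: add_nonneg_eq_0_iff)
    then have "b = 0" "c = 0"
      using psd_cinner_eq_0_imp_eq_0[OF B] psd_cinner_eq_0_imp_eq_0[OF C] by (auto simp: b_def c_def)
    then have "of_real (mu k) * cinner w w = 0"
      by (metis bc cinner_scale_right cinner_zero_right diff_self)
    then show ?thesis using False orthonormal_cinner_self[OF v(1)] by (simp add: w_def)
  qed (use v(2) in simp)
  then have "B - C = 0" by (intro matrix_eq_on_orthonormal[OF v(1)]) simp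
  then show ?thesis by simp
qed

lemma
  fixes A :: "complex^'d::finite^'d"
  assumes "psd A"
  shows psd_msqrt: "psd (msqrt A)" and msqrt_square: "msqrt A ** msqrt A = A"
proof -
  have "\<exists>!B. psd B \<and> B ** B = A"
    using psd_sqrt_exists[OF assms] psd_sqrt_unique by blast
  then show "psd (msqrt A)" "msqrt A ** msqrt A = A"
    using theI'[of "\<lambda>B. psd B \<and> B ** B = A"] by (simp_all add: msqrt_def)
qed

lemma cadj_msqrt: "psd A \<Longrightarrow> cadj (msqrt A) = msqrt A"
  using psd_msqrt psd_hermitian hermitian_def by metis

section \<open>Trace norm and polar decomposition\<close>

definition mabs :: "complex^'d::finite^'d \<Rightarrow> complex^'d^'d" where
  "mabs Z = msqrt (cadj Z ** Z)"

definition trace_norm :: "complex^'d::finite^'d \<Rightarrow> real" where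
  "trace_norm Z = Re (trace (mabs Z))"

lemma psd_mabs: "psd (mabs Z)"
  by (simp add: mabs_def psd_msqrt psd_cadj_mult_self)

lemma mabs_square: "mabs Z ** mabs Z = cadj Z ** Z"
  by (simp add: mabs_def msqrt_square psd_cadj_mult_self)

lemma cadj_mabs: "cadj (mabs Z) = mabs Z"
  using psd_hermitian[OF psd_mabs] by (simp add: hermitian_def)

lemma mabs_spectral:
  fixes Z :: "complex^'d::finite^'d"
  obtains u d where "orthonormal UNIV u" "\<And>k. mabs Z *v u k = of_real (d k) *s u k"
    "\<And>k. d k \<ge> 0"
proof -
  obtain u d where u: "orthonormal UNIV u" "\<And>k. mabs Z *v u k = of_real (d k) *s u k"
    using hermitian_spectral[OF psd_hermitian[OF psd_mabs]] by blast
  moreover have "d k \<ge> 0" for k using psd_eigenvalue_nonneg[OF psd_mabs u(1) u(2)] .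
  ultimately show ?thesis using that by blast
qed

lemma cinner_mult_mabs_eigenvector:
  fixes Z :: "complex^'d::finite^'d"
  assumes "mabs Z *v u = of_real d *s u"
  shows "cinner (Z *v x) (Z *v u) = of_real (d^2) * cinner x u"
proof -
  have "cinner (Z *v x) (Z *v u) = cinner x ((mabs Z ** mabs Z) *v u)"
    by (simp add: mabs_square cinner_cadj_mult_self)
  also have "\<dots> = of_real (d^2) * cinner x u"
    using assms by (simp add: vector_scalar_commute cinner_scale_right power2_eq_square
        flip: matrix_vector_mul_assoc)
  finally show ?thesis .
qed

lemma norm_mult_mabs_eigenvector:
  fixes Z :: "complex^'d::finite^'d"
  assumes "mabs Z *v u = of_real d *s u" "d \<ge> 0" "norm u = 1"
  shows "norm (Z *v u) = d"
proof -
  have "of_real ((norm (Z *v u))\<^sup>2) = (of_real (d^2) :: complex)"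
    using cinner_mult_mabs_eigenvector[OF assms(1), of u] assms(3)
    by (simp add: cinner_self)
  then show ?thesis using assms(2) by (simp add: power2_eq_iff_nonneg flip: of_real_power)
qed

lemma trace_norm_eq_sum_eigenvalues:
  assumes "orthonormal UNIV u" "\<And>k. mabs Z *v u k = of_real (d k) *s u k"
  shows "trace_norm Z = (\<Sum>k\<in>UNIV. d k)"
  using assms
  by (simp add: trace_norm_def trace_orthonormal[OF assms(1)] cinner_scale_right
      orthonormal_cinner_self Re_sum)

theorem Re_trace_unitary_mult_le_trace_norm:
  fixes Z V :: "complex^'d::finite^'d"
  assumes V: "unitary V"
  shows "Re (trace (V ** Z)) \<le> trace_norm Z"
proof -
  obtain u d where u: "orthonormal UNIV u" "\<And>k. mabs Z *v u k = of_real (d k) *s u k"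
      "\<And>k. d k \<ge> 0"
    using mabs_spectral[of Z] by metis
  have nu: "norm (u k) = 1" for k
    using orthonormal_cinner_self[OF u(1)] cinner_self_eq_1_iff by blast
  have "Re (trace (V ** Z)) = (\<Sum>k\<in>UNIV. Re (cinner (cadj V *v u k) (Z *v u k)))"
    by (simp add: trace_orthonormal[OF u(1)] cinner_cadj Re_sum flip: matrix_vector_mul_assoc)
  also have "\<dots> \<le> (\<Sum>k\<in>UNIV. norm (cadj V *v u k) * norm (Z *v u k))"
    unfolding Re_cinner by (intro sum_mono norm_cauchy_schwarz)
  also have "\<dots> = (\<Sum>k\<in>UNIV. d k)"
    using unitary_norm[OF unitary_cadj[OF V]] norm_mult_mabs_eigenvector[OF u(2) u(3) nu] nu
    by simp
  also have "\<dots> = trace_norm Z" using trace_norm_eq_sum_eigenvalues[OF u(1) u(2)] by simp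
  finally show ?thesis .
qed

text \<open>The unitary factor maps the eigenbasis \<open>u\<close> of \<open>|Z|\<close> to an orthonormal basis that extends the
  normalised images \<open>Z u\<^sub>k / d\<^sub>k\<close> for the nonzero eigenvalues \<open>d\<^sub>k\<close>.\<close>
theorem polar_decomposition:
  fixes Z :: "complex^'d::finite^'d"
  obtains W where "unitary W" "W ** mabs Z = Z"
proof -
  obtain u d where u: "orthonormal UNIV u" "\<And>k. mabs Z *v u k = of_real (d k) *s u k"
      "\<And>k. d k \<ge> 0"
    using mabs_spectral[of Z] by metis
  have nu: "norm (u k) = 1" for k
    using orthonormal_cinner_self[OF u(1)] cinner_self_eq_1_iff by blast
  define T where "T = {k. d k \<noteq> 0}"
  define w where "w k = (1 / d k) *\<^sub>R (Z *v u k)" for k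
  have onw: "orthonormal T w"
    using u(1)
    by (auto simp: orthonormal_def T_def w_def cinner_scaleR_left cinner_scaleR_right
        cinner_mult_mabs_eigenvector[OF u(2)] power2_eq_square)
  then obtain w' where w': "orthonormal UNIV w'" "\<forall>a\<in>T. w' a = w a"
    using orthonormal_extend[where Q = "\<lambda>_. True", OF _ onw] exists_unit_orthogonal by blast
  define W where "W = cols w' ** cadj (cols u)"
  have "unitary W"
    unfolding W_def using w'(1) u(1) by (intro unitary_mult unitary_cadj) (simp_all add: unitary_cols)
  moreover have "W ** mabs Z = Z"
  proof (rule matrix_eq_on_orthonormal[OF u(1)])
    fix k
    have "(W ** mabs Z) *v u k = of_real (d k) *s w' k"
      by (simp add: W_def u(2) vector_scalar_commute cadj_cols_mult_orthonormal[OF u(1)]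
          cols_mult_axis flip: matrix_vector_mul_assoc)
    also have "\<dots> = Z *v u k"
    proof (cases "d k = 0")
      case True
      then show ?thesis using norm_mult_mabs_eigenvector[OF u(2) u(3) nu, of k] by simp
    next
      case False
      then show ?thesis using w'(2)
        by (simp add: T_def w_def scaleR_eq_scale_of_real vector_smult_assoc flip: of_real_mult)
    qed
    finally show "(W ** mabs Z) *v u k = Z *v u k" .
  qed
  ultimately show ?thesis using that by blast
qed

lemma trace_norm_le_cadj: "trace_norm (Z::complex^'d::finite^'d) \<le> trace_norm (cadj Z)"
proof -
  obtain W where W: "unitary W" "W ** mabs Z = Z" by (rule polar_decomposition)
  then have "cadj Z = mabs Z ** cadj W" by (metis cadj_matrix_mult cadj_mabs)
  then have "trace (W ** cadj Z) = trace (cadj W ** (W ** mabs Z))"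
    by (simp add: matrix_mul_assoc trace_mul_sym[of _ "cadj W"])
  then have "Re (trace (W ** cadj Z)) = trace_norm Z"
    using W(1) by (simp add: unitary_def trace_norm_def matrix_mul_assoc)
  then show ?thesis using Re_trace_unitary_mult_le_trace_norm[OF W(1), of "cadj Z"] by simp
qed

lemma trace_norm_cadj: "trace_norm (cadj (Z::complex^'d::finite^'d)) = trace_norm Z"
  using trace_norm_le_cadj[of Z] trace_norm_le_cadj[of "cadj Z"] by simp

section \<open>Fidelity at the maximizing state\<close>

lemma uhlmann_fid_mult_cadj:
  fixes \<rho> Y :: "complex^'d::finite^'d"
  assumes "psd \<rho>"
  shows "uhlmann_fid \<rho> (Y ** cadj Y) = trace_norm (cadj Y ** msqrt \<rho>)"
proof -
  have "cadj (cadj Y ** msqrt \<rho>) ** (cadj Y ** msqrt \<rho>) = msqrt \<rho> ** (Y ** cadj Y) ** msqrt \<rho>"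
    using cadj_msqrt[OF assms] by (simp add: cadj_matrix_mult matrix_mul_assoc)
  then show ?thesis by (simp add: uhlmann_fid_def trace_norm_def mabs_def)
qed

lemma inner_eq_Re_trace: "inner (Y::complex^'d::finite^'d) B = Re (trace (B ** cadj Y))"
  by (simp add: trace_def matrix_matrix_mult_def inner_vec_def inner_complex_def Re_sum mult.commute)

lemma trace_mult_cadj_self: "trace ((Y::complex^'d::finite^'d) ** cadj Y) = of_real ((norm Y)\<^sup>2)"
proof -
  have "Im (trace (Y ** cadj Y)) = 0"
    by (simp add: trace_def matrix_matrix_mult_def Im_sum mult.commute)
  moreover have "Re (trace (Y ** cadj Y)) = (norm Y)\<^sup>2"
    using inner_eq_Re_trace[of Y Y] by (simp add: power2_norm_eq_inner)
  ultimately show ?thesis by (simp add: complex_eq_iff)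
qed

lemma density_mult_cadj: "norm (Y::complex^'d::finite^'d) = 1 \<Longrightarrow> density (Y ** cadj Y)"
  by (simp add: density_def psd_mult_cadj_self trace_mult_cadj_self)

lemma unitary_phase_shift:
  fixes x :: "complex^'d::finite"
  assumes x: "norm x = 1" and e: "cmod e = 1"
  shows "unitary (mat 1 + outer ((e - 1) *s x) x)"
proof -
  define Q where "Q = mat 1 + outer ((e - 1) *s x) x"
  have xx: "cinner x x = 1" using x by (simp add: cinner_self_eq_1_iff)
  have ee: "cnj e * e = 1"
    using e by (metis complex_norm_square mult.commute of_real_1 power_one)
  have "(cadj Q ** Q) *v z = z" for z
  proof -
    have Qz: "Q *v z = z + ((e - 1) * cinner x z) *s x"
      by (simp add: Q_def matrix_vector_mult_add_rdistrib outer_mult_vec vec_eq_iff algebra_simps)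
    have xQz: "cinner x (Q *v z) = e * cinner x z"
      unfolding Qz by (simp add: cinner_add_right cinner_diff_right cinner_scale_right xx algebra_simps)
    have "cadj Q = mat 1 + outer x ((e - 1) *s x)"
      by (simp add: Q_def cadj_add cadj_outer vec_eq_iff mat_def)
    then have "(cadj Q ** Q) *v z = Q *v z + (cnj (e - 1) * cinner x (Q *v z)) *s x"
      by (simp only: matrix_vector_mult_add_rdistrib outer_mult_vec cinner_scale_left
          matrix_vector_mul_lid flip: matrix_vector_mul_assoc)
    also have "\<dots> = z + ((cnj e * e - 1) * cinner x z) *s x"
      unfolding xQz unfolding Qz by (simp add: vector_sadd_rdistrib algebra_simps)
    finally show ?thesis using ee by simp
  qed
  then show ?thesis by (simp add: unitary_def Q_def matrix_eq)
qed

lemma exists_phase: "\<exists>e. cmod e = 1 \<and> e * g = of_real (cmod g)"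
proof (cases "g = 0")
  case False
  then show ?thesis
    by (intro exI[of _ "cnj g / of_real (cmod g)"])
       (simp add: norm_divide complex_norm_square[symmetric] power2_eq_square field_simps
         flip: of_real_mult)
qed (intro exI[of _ 1], simp)

text \<open>Polarization: a quadratic form that vanishes on a subspace invariant under \<open>M\<close>
  forces \<open>M\<close> to vanish there, since \<open>\<langle>M x, M x\<rangle>\<close> is a combination of values of the form on it.\<close>
lemma cinner_quadratic_vanishes_on_invariant:
  fixes M :: "complex^'d::finite^'d"
  assumes K_add: "\<And>x y. x \<in> K \<Longrightarrow> y \<in> K \<Longrightarrow> x + y \<in> K"
    and K_scale: "\<And>x c. x \<in> K \<Longrightarrow> c *s x \<in> K"
    and K_M: "\<And>x. x \<in> K \<Longrightarrow> M *v x \<in> K"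
    and zero: "\<And>x. x \<in> K \<Longrightarrow> cinner x (M *v x) = 0"
    and x: "x \<in> K"
  shows "M *v x = 0"
proof -
  define y where "y = M *v x"
  have y: "y \<in> K" using K_M[OF x] by (simp add: y_def)
  define al be where "al = cinner y (M *v x)" and "be = cinner x (M *v y)"
  have "cinner (y + x) (M *v (y + x)) = 0" by (rule zero[OF K_add[OF y x]])
  then have "al + be = 0"
    using zero[OF y] zero[OF x]
    by (simp add: al_def be_def matrix_vector_right_distrib cinner_add_left cinner_add_right add_ac)
  moreover have "cinner (y + \<i> *s x) (M *v (y + \<i> *s x)) = 0"
    by (rule zero[OF K_add[OF y K_scale[OF x]]])
  then have "\<i> * al - \<i> * be = 0"
    using zero[OF y] zero[OF x]
    by (simp add: al_def be_def matrix_vector_right_distrib cinner_add_left cinner_add_right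
        vector_scalar_commute cinner_scale_left cinner_scale_right)
  ultimately have "cinner y y = 0" by (simp add: al_def y_def algebra_simps)
  then show ?thesis by (simp add: y_def)
qed

locale fidelity_maximizer =
  fixes \<rho> :: "nat \<Rightarrow> complex^'d::finite^'d"
    and n :: nat
    and f :: "complex^'d^'d \<Rightarrow> real"
    and \<sigma> :: "complex^'d^'d"
  assumes n: "n \<ge> 2"
    and rho: "\<And>i. i < n \<Longrightarrow> density (\<rho> i) \<and> pd (\<rho> i)"
    and f_def: "\<And>X. f X = (\<Sum>i<n. uhlmann_fid (\<rho> i) X)"
    and sigma_dens: "density \<sigma>"
    and sigma_max: "\<And>X. density X \<Longrightarrow> f X \<le> f \<sigma>"
begin

definition P :: "nat \<Rightarrow> complex^'d^'d" where "P i = msqrt (\<rho> i)"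
definition s :: "complex^'d^'d" where "s = msqrt \<sigma>"
definition A :: "nat \<Rightarrow> complex^'d^'d" where "A i = mabs (P i ** s)"
definition W :: "nat \<Rightarrow> complex^'d^'d" where "W i = (SOME W. unitary W \<and> W ** A i = P i ** s)"
definition B :: "nat \<Rightarrow> complex^'d^'d" where "B i = P i ** W i"

lemma psd_rho: "i < n \<Longrightarrow> psd (\<rho> i)"
  using rho by (simp add: density_def)

lemma cadj_P: "i < n \<Longrightarrow> cadj (P i) = P i"
  by (simp add: P_def cadj_msqrt psd_rho)

lemma P_square: "i < n \<Longrightarrow> P i ** P i = \<rho> i"
  by (simp add: P_def msqrt_square psd_rho)

lemma psd_sigma: "psd \<sigma>"
  using sigma_dens by (simp add: density_def)

lemma cadj_s: "cadj s = s"
  by (simp add: s_def cadj_msqrt psd_sigma)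

lemma s_square: "s ** s = \<sigma>"
  by (simp add: s_def msqrt_square psd_sigma)

lemma norm_s: "norm s = 1"
proof -
  have "of_real ((norm s)\<^sup>2) = trace (s ** cadj s)" by (rule trace_mult_cadj_self[symmetric])
  also have "\<dots> = 1" using sigma_dens by (simp add: cadj_s s_square density_def)
  finally have "(norm s)\<^sup>2 = 1" by (metis of_real_eq_1_iff)
  then show ?thesis using norm_ge_zero[of s] by (auto simp: power2_eq_1_iff)
qed

lemma
  shows unitary_W: "unitary (W i)" and W_mult_A: "W i ** A i = P i ** s"
proof -
  have "\<exists>W. unitary W \<and> W ** A i = P i ** s"
    using polar_decomposition[of "P i ** s"] unfolding A_def by blast
  then have "unitary (W i) \<and> W i ** A i = P i ** s" unfolding W_def by (rule someI_ex)
  then show "unitary (W i)" "W i ** A i = P i ** s" by auto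
qed

lemma cadj_A: "cadj (A i) = A i"
  by (simp add: A_def cadj_mabs)

lemma A_square: "i < n \<Longrightarrow> A i ** A i = s ** \<rho> i ** s"
  by (simp add: A_def mabs_square cadj_matrix_mult cadj_P cadj_s matrix_mul_assoc
      flip: P_square)

lemma A_eq_msqrt: "i < n \<Longrightarrow> A i = msqrt (msqrt \<sigma> ** \<rho> i ** msqrt \<sigma>)"
  by (simp add: A_def mabs_def cadj_matrix_mult cadj_P cadj_s matrix_mul_assoc flip: s_def P_square)

lemma uhlmann_fid_sigma: "i < n \<Longrightarrow> uhlmann_fid (\<rho> i) \<sigma> = trace_norm (P i ** s)"
  using uhlmann_fid_mult_cadj[OF psd_rho, of i s] trace_norm_cadj[of "P i ** s"]
  by (simp add: P_def cadj_s s_square cadj_matrix_mult cadj_msqrt psd_rho)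

lemma f_ge_Re_trace:
  assumes "\<And>i. i < n \<Longrightarrow> unitary (V i)"
  shows "(\<Sum>i<n. Re (trace (V i ** (cadj Y ** P i)))) \<le> f (Y ** cadj Y)"
  unfolding f_def
proof (rule sum_mono)
  fix i assume "i \<in> {..<n}"
  then show "Re (trace (V i ** (cadj Y ** P i))) \<le> uhlmann_fid (\<rho> i) (Y ** cadj Y)"
    using uhlmann_fid_mult_cadj[OF psd_rho, of i Y] Re_trace_unitary_mult_le_trace_norm[OF assms]
    by (simp add: P_def)
qed

lemma Re_trace_W_mult: "Re (trace (W i ** (cadj Y ** P i))) = inner Y (B i)"
proof -
  have "trace (P i ** W i ** cadj Y) = trace ((W i ** cadj Y) ** P i)"
    by (metis matrix_mul_assoc trace_mul_sym)
  then show ?thesis by (simp add: inner_eq_Re_trace B_def matrix_mul_assoc)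
qed

lemma Re_trace_W_mult_s: "i < n \<Longrightarrow> Re (trace (W i ** (cadj s ** P i))) = trace_norm (P i ** s)"
proof -
  assume i: "i < n"
  have "cadj (W i ** (cadj s ** P i)) = W i ** A i ** cadj (W i)"
    using i by (simp add: cadj_matrix_mult cadj_P cadj_s W_mult_A matrix_mul_assoc)
  then have "Re (trace (W i ** (cadj s ** P i))) = Re (trace (cadj (W i) ** (W i ** A i)))"
    by (metis Re_trace_cadj trace_mul_sym)
  then show ?thesis
    using unitary_W[of i] by (simp add: trace_norm_def A_def unitary_def matrix_mul_assoc)
qed

lemma f_sigma_eq_sum_trace_norm: "f \<sigma> = (\<Sum>i<n. trace_norm (P i ** s))"
  by (simp add: f_def uhlmann_fid_sigma)

lemma f_sigma_eq_inner: "f \<sigma> = inner s (\<Sum>i<n. B i)"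
  by (simp add: f_sigma_eq_sum_trace_norm inner_sum_right flip: Re_trace_W_mult Re_trace_W_mult_s)

text \<open>On the unit sphere the linear functional \<open>Y \<mapsto> \<langle>Y, \<Sum> B\<^sub>i\<rangle>\<close> bounds \<open>f (Y Y\<^sup>*)\<close> from below and
  agrees with it at \<open>Y = s\<close>; so \<open>s\<close> maximizes it, and the equality case of Cauchy--Schwarz applies.\<close>
lemma sum_B_eq: "(\<Sum>i<n. B i) = f \<sigma> *\<^sub>R s"
proof (cases "(\<Sum>i<n. B i) = 0")
  case True
  then show ?thesis using f_sigma_eq_inner by simp
next
  case False
  define Bs where "Bs = (\<Sum>i<n. B i)"
  define Y where "Y = (1 / norm Bs) *\<^sub>R Bs"
  have "norm Bs = inner Y Bs"
    using False by (simp add: Bs_def Y_def power2_norm_eq_inner[symmetric] power2_eq_square)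
  also have "\<dots> \<le> f (Y ** cadj Y)"
    using f_ge_Re_trace[of W Y] unitary_W by (simp add: Re_trace_W_mult Bs_def inner_sum_right)
  also have "\<dots> \<le> f \<sigma>"
    using False by (intro sigma_max density_mult_cadj) (simp add: Y_def Bs_def)
  finally have "norm Bs \<le> f \<sigma>" .
  moreover have "f \<sigma> \<le> norm s * norm Bs"
    unfolding f_sigma_eq_inner Bs_def by (rule norm_cauchy_schwarz)
  ultimately have "f \<sigma> = norm Bs" "inner s Bs = norm s * norm Bs"
    using norm_s f_sigma_eq_inner by (simp_all add: Bs_def)
  then have "norm s *\<^sub>R Bs = f \<sigma> *\<^sub>R s" by (simp only: norm_cauchy_schwarz_eq)
  then show ?thesis using norm_s by (simp add: Bs_def)
qed

lemma s_mult_B: "i < n \<Longrightarrow> s ** B i = A i"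
proof -
  assume i: "i < n"
  have "s ** P i = A i ** cadj (W i)"
    using i W_mult_A[of i] cadj_A[of i] by (metis cadj_matrix_mult cadj_P cadj_s)
  then have "s ** B i = A i ** (cadj (W i) ** W i)" by (simp add: B_def matrix_mul_assoc)
  then show ?thesis using unitary_W[of i] by (simp add: unitary_def)
qed

lemma A_eq_cadj_B_mult: "i < n \<Longrightarrow> A i = cadj (B i) ** s"
  using s_mult_B cadj_A by (metis cadj_matrix_mult cadj_s)

lemma sum_A_eq: "(\<Sum>i<n. A i) = f \<sigma> *\<^sub>R \<sigma>"
proof -
  have "(\<Sum>i<n. A i) = (\<Sum>i<n. cadj (B i) ** s)"
    by (simp add: A_eq_cadj_B_mult)
  also have "\<dots> = f \<sigma> *\<^sub>R \<sigma>"
    by (simp add: sum_B_eq cadj_scaleR cadj_s s_square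
        flip: cadj_sum sum_matrix_mult scalar_matrix_assoc)
  finally show ?thesis .
qed

lemma A_kernel_s: "i < n \<Longrightarrow> s *v x = 0 \<Longrightarrow> A i *v x = 0"
  using cinner_cadj_mult_self[of x "A i" x] cadj_A[of i]
  by (simp add: A_square flip: matrix_vector_mul_assoc)

lemma B_kernel_s: "i < n \<Longrightarrow> s *v x = 0 \<Longrightarrow> s *v (B i *v x) = 0"
  by (simp add: matrix_vector_mul_assoc s_mult_B A_kernel_s)

lemma B_injective: "i < n \<Longrightarrow> B i *v x = 0 \<Longrightarrow> x = 0"
proof -
  assume i: "i < n" and x: "B i *v x = 0"
  then have "\<rho> i *v (W i *v x) = 0"
    by (metis B_def P_square matrix_vector_mul_assoc matrix_vector_mult_0_right)
  then have "W i *v x = 0"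
    using rho[OF i] unfolding pd_def by (metis cinner_zero_right less_irrefl zero_complex.sel(1))
  then show "x = 0"
    using unitary_W[of i] by (metis unitary_norm norm_eq_zero)
qed

lemma norm_perturbation:
  assumes x: "norm x = 1" "s *v x = 0"
  shows "norm (a *\<^sub>R s + b *\<^sub>R outer x x) = sqrt (a\<^sup>2 + b\<^sup>2)"
proof -
  have "inner s (outer x x) = 0"
    by (simp add: inner_eq_Re_trace outer_mult_matrix cadj_s x(2) trace_0[unfolded mat_0])
  moreover have "cinner x x = 1" using x(1) by (simp add: cinner_self_eq_1_iff)
  then have "inner (outer x x) (outer x x) = 1"
    by (simp add: inner_eq_Re_trace outer_mult_matrix cadj_outer outer_mult_vec trace_outer
        cinner_scale_left)
  moreover have "inner s s = 1" using norm_s by (simp flip: power2_norm_eq_inner)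
  ultimately show ?thesis
    by (simp add: norm_eq_sqrt_inner inner_add_left inner_add_right
        inner_commute[of "outer x x" s] power2_eq_square)
qed

text \<open>Rotating the phase of each \<open>W i\<close> on the kernel vector \<open>x\<close> aligns the cross terms
  \<open>\<langle>x, B\<^sub>i x\<rangle>\<close>, so that all of them contribute with their modulus.\<close>
lemma f_perturbation_ge:
  fixes a b :: real
  assumes x: "norm x = 1" "s *v x = 0"
  defines "Y \<equiv> a *\<^sub>R s + b *\<^sub>R outer x x"
  shows "a * f \<sigma> + b * (\<Sum>i<n. cmod (cinner x (B i *v x))) \<le> f (Y ** cadj Y)"
proof -
  define gam where "gam i = cinner x (B i *v x)" for i
  obtain e where e: "\<And>i. cmod (e i) = 1 \<and> e i * gam i = of_real (cmod (gam i))"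
    using choice[of "\<lambda>i c. cmod c = 1 \<and> c * gam i = of_real (cmod (gam i))"] exists_phase by blast
  define Q where "Q i = mat 1 + outer ((e i - 1) *s x) x" for i
  have unitary_Q: "unitary (Q i)" for i
    unfolding Q_def using e by (intro unitary_phase_shift x(1)) simp
  have Q_s: "Q i ** s = s" for i
    by (simp add: Q_def matrix_add_rdistrib outer_mult_matrix cadj_s x(2))
  have "cinner x x = 1" using x(1) by (simp add: cinner_self_eq_1_iff)
  then have "Q i *v x = e i *s x" for i
    by (simp add: Q_def matrix_vector_mult_add_rdistrib outer_mult_vec vec_eq_iff algebra_simps)
  then have "Q i ** outer x x = outer (e i *s x) x" for i
    by (simp add: matrix_mult_outer)
  then have QY: "Q i ** cadj Y = a *\<^sub>R s + b *\<^sub>R outer (e i *s x) x" for i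
    by (simp add: Y_def cadj_add cadj_scaleR cadj_outer cadj_s matrix_add_ldistrib
        matrix_scalar_ac Q_s flip: scalar_matrix_assoc)
  have Re_trace: "Re (trace ((W i ** Q i) ** (cadj Y ** P i))) =
      a * trace_norm (P i ** s) + b * cmod (gam i)" if i: "i < n" for i
  proof -
    have "(W i ** Q i) ** (cadj Y ** P i) = W i ** ((Q i ** cadj Y) ** P i)"
      by (simp add: matrix_mul_assoc)
    also have "\<dots> = a *\<^sub>R (W i ** (cadj s ** P i)) + b *\<^sub>R (W i ** outer (e i *s x) x ** P i)"
      unfolding QY
      by (simp add: matrix_add_rdistrib matrix_add_ldistrib matrix_scalar_ac cadj_s matrix_mul_assoc
          flip: scalar_matrix_assoc)
    finally have "(W i ** Q i) ** (cadj Y ** P i) =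
        a *\<^sub>R (W i ** (cadj s ** P i)) + b *\<^sub>R (W i ** outer (e i *s x) x ** P i)" .
    moreover have "trace (W i ** outer (e i *s x) x ** P i) = e i * gam i"
      by (simp add: trace_mult_outer_mult gam_def B_def vector_scalar_commute cinner_scale_right)
    ultimately show ?thesis
      using Re_trace_W_mult_s[OF i] e[of i] by (simp add: trace_add trace_scaleR)
  qed
  have "a * f \<sigma> + b * (\<Sum>i<n. cmod (gam i)) = (\<Sum>i<n. Re (trace ((W i ** Q i) ** (cadj Y ** P i))))"
    by (simp add: Re_trace f_sigma_eq_sum_trace_norm sum.distrib sum_distrib_left)
  also have "\<dots> \<le> f (Y ** cadj Y)"
    using unitary_W unitary_Q by (intro f_ge_Re_trace unitary_mult)
  finally show ?thesis by (simp add: gam_def)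
qed

text \<open>With \<open>g = \<Sum> |\<langle>x, B\<^sub>i x\<rangle>|\<close>, the perturbation of \<open>s\<close> in direction \<open>(f \<sigma>, g)\<close> reaches the value
  \<open>\<surd>(f \<sigma>\<^sup>2 + g\<^sup>2)\<close>, so maximality of \<open>\<sigma>\<close> forces \<open>g = 0\<close>.\<close>
lemma sum_cmod_B_kernel_s:
  assumes x: "norm x = 1" "s *v x = 0"
  shows "(\<Sum>i<n. cmod (cinner x (B i *v x))) = 0"
proof (rule ccontr)
  define g where "g = (\<Sum>i<n. cmod (cinner x (B i *v x)))"
  assume "g \<noteq> 0"
  then have "g > 0" by (simp add: g_def order_less_le sum_nonneg)
  define r where "r = sqrt ((f \<sigma>)\<^sup>2 + g\<^sup>2)"
  have r: "r > 0" "r\<^sup>2 = (f \<sigma>)\<^sup>2 + g\<^sup>2" "f \<sigma> < r"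
    using \<open>g > 0\<close> by (auto simp: r_def add_nonneg_pos intro: real_less_rsqrt)
  define Y where "Y = (f \<sigma> / r) *\<^sub>R s + (g / r) *\<^sub>R outer x x"
  have "(f \<sigma> / r)\<^sup>2 + (g / r)\<^sup>2 = 1"
    using r \<open>g > 0\<close> by (simp add: power_divide flip: add_divide_distrib)
  then have "norm Y = 1" using norm_perturbation[OF x] by (simp add: Y_def)
  have "r = (f \<sigma> / r) * f \<sigma> + (g / r) * g"
    using r by (simp add: field_simps power2_eq_square)
  also have "\<dots> \<le> f (Y ** cadj Y)"
    unfolding Y_def g_def by (rule f_perturbation_ge[OF x])
  also have "\<dots> \<le> f \<sigma>" by (rule sigma_max[OF density_mult_cadj[OF \<open>norm Y = 1\<close>]])
  finally show False using r by simp
qed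

lemma cinner_B_kernel_s: "i < n \<Longrightarrow> s *v x = 0 \<Longrightarrow> cinner x (B i *v x) = 0"
proof (cases "x = 0")
  case False
  assume i: "i < n" and x: "s *v x = 0"
  define y where "y = (1 / norm x) *\<^sub>R x"
  have "(\<Sum>i<n. cmod (cinner y (B i *v y))) = 0"
    using False x by (intro sum_cmod_B_kernel_s) (simp_all add: y_def matrix_vector_mult_scaleR_complex)
  then have "cinner y (B i *v y) = 0" using i by (simp add: sum_nonneg_eq_0_iff)
  then show ?thesis
    using False by (simp add: y_def matrix_vector_mult_scaleR_complex cinner_scaleR_left cinner_scaleR_right)
qed simp

lemma pd_sigma: "pd \<sigma>"
  unfolding pd_def
proof (intro conjI allI impI)
  show "hermitian \<sigma>" using psd_sigma by (rule psd_hermitian)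
  fix x :: "complex^'d"
  assume "x \<noteq> 0"
  have "0 < n" using n by simp
  show "0 < Re (cinner x (\<sigma> *v x))"
  proof (rule ccontr)
    assume "\<not> ?thesis"
    then have "Re (cinner x (\<sigma> *v x)) = 0" using psd_cinner_nonneg[OF psd_sigma, of x] by simp
    then have "s *v x = 0"
      using cinner_cadj_mult_self[of x s x] by (simp add: cadj_s s_square Re_cinner_self)
    then have "B 0 *v x = 0"
      using \<open>0 < n\<close>
      by (intro cinner_quadratic_vanishes_on_invariant[where K = "{x. s *v x = 0}"])
         (simp_all add: matrix_vector_right_distrib vector_scalar_commute B_kernel_s cinner_B_kernel_s)
    then show False using B_injective[OF \<open>0 < n\<close>] \<open>x \<noteq> 0\<close> by blast
  qed
qed

lemma gen_fid_eq_trace: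
  "i < n \<Longrightarrow> j < n \<Longrightarrow> gen_fid \<sigma> (\<rho> i) (\<rho> j) = trace (A i ** matrix_inv \<sigma> ** A j)"
  by (simp add: gen_fid_def A_eq_msqrt)

lemma sigma_matrix_inv: "\<sigma> ** matrix_inv \<sigma> = mat 1" "s ** matrix_inv \<sigma> ** s = mat 1"
proof -
  have "\<sigma> *v x = 0 \<Longrightarrow> x = 0" for x
    using pd_sigma unfolding pd_def by (metis cinner_zero_right less_irrefl zero_complex.sel(1))
  then show inv: "\<sigma> ** matrix_inv \<sigma> = mat 1" by (rule matrix_inv_if_injective)
  then have "s ** (s ** matrix_inv \<sigma>) = mat 1" by (simp add: matrix_mul_assoc s_square)
  then show "s ** matrix_inv \<sigma> ** s = mat 1" by (simp add: matrix_left_right_inverse)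
qed

lemma gen_fid_self: "i < n \<Longrightarrow> gen_fid \<sigma> (\<rho> i) (\<rho> i) = 1"
proof -
  assume i: "i < n"
  have "trace (A i ** matrix_inv \<sigma> ** A i) = trace (A i ** A i ** matrix_inv \<sigma>)"
    using trace_mul_sym[of "A i ** matrix_inv \<sigma>" "A i"] by (simp add: matrix_mul_assoc)
  also have "\<dots> = trace (\<rho> i ** (s ** matrix_inv \<sigma> ** s))"
    using i trace_mul_sym[of s "\<rho> i ** s ** matrix_inv \<sigma>"] by (simp add: A_square matrix_mul_assoc)
  also have "\<dots> = 1" using rho[OF i] by (simp add: sigma_matrix_inv density_def)
  finally show ?thesis using gen_fid_eq_trace[OF i i] by simp
qed

lemma sum_gen_fid: "(\<Sum>i<n. \<Sum>j<n. gen_fid \<sigma> (\<rho> i) (\<rho> j)) = of_real ((f \<sigma>)\<^sup>2)"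
proof -
  have "(\<Sum>i<n. \<Sum>j<n. gen_fid \<sigma> (\<rho> i) (\<rho> j)) =
      (\<Sum>i<n. trace (A i ** matrix_inv \<sigma> ** (\<Sum>j<n. A j)))"
    by (simp add: gen_fid_eq_trace trace_sum matrix_mult_sum)
  also have "\<dots> = trace ((\<Sum>i<n. A i) ** matrix_inv \<sigma> ** (\<Sum>j<n. A j))"
    by (simp add: trace_sum sum_matrix_mult)
  also have "\<dots> = of_real ((f \<sigma>)\<^sup>2)"
    using sigma_dens
    by (simp add: sum_A_eq matrix_scalar_ac sigma_matrix_inv trace_scaleR density_def
        power2_eq_square flip: scalar_matrix_assoc)
  finally show ?thesis .
qed

lemma multi_fid_eq: "multi_fid \<sigma> n \<rho> = of_real (((f \<sigma>)\<^sup>2 - real n) / (real n ^ 2 - real n))"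
proof -
  have "(\<Sum>i<n. \<Sum>j\<in>{..<n} - {i}. gen_fid \<sigma> (\<rho> i) (\<rho> j)) =
        (\<Sum>i<n. (\<Sum>j<n. gen_fid \<sigma> (\<rho> i) (\<rho> j)) - 1)"
    by (intro sum.cong refl) (simp add: sum_diff1 gen_fid_self)
  also have "\<dots> = of_real ((f \<sigma>)\<^sup>2 - real n)" by (simp add: sum_subtractf sum_gen_fid)
  moreover have "of_nat n * (of_nat n - 1) = (of_real (real n ^ 2 - real n) :: complex)"
    by (simp add: power2_eq_square algebra_simps)
  ultimately show ?thesis unfolding multi_fid_def by (simp only: of_real_divide)
qed

end

theorem mainTheorem16:
  fixes \<rho> :: "nat \<Rightarrow> complex^'d::finite^'d"
    and n :: nat
    and f :: "complex^'d^'d \<Rightarrow> real"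
    and \<sigma> :: "complex^'d^'d"
  assumes n: "n \<ge> 2"
    and rho: "\<And>i. i < n \<Longrightarrow> density (\<rho> i) \<and> pd (\<rho> i)"
    and f_def: "\<And>X. f X = (\<Sum>i<n. uhlmann_fid (\<rho> i) X)"
    and sigma_dens: "density \<sigma>"
    and sigma_max: "\<And>X. density X \<Longrightarrow> f X \<le> f \<sigma>"
  shows "complex_of_real ((f \<sigma>)\<^sup>2) = (\<Sum>i<n. \<Sum>j<n. gen_fid \<sigma> (\<rho> i) (\<rho> j))
       \<and> multi_fid \<sigma> n \<rho> = complex_of_real (((f \<sigma>)\<^sup>2 - real n) / (real n ^ 2 - real n))"
proof -
  interpret fidelity_maximizer \<rho> n f \<sigma> using assms by unfold_locales auto
  show ?thesis using sum_gen_fid multi_fid_eq by simp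
qed

end
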